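(* Let $G$ be a graph, $B\subseteq V(G)$ and $\ell\ge 1$. Then $B$ is an $\ell$-edge-leaky forcing set of $G$ if and only if $B$ is an $(\ell-1)$-leaky forcing set of $G$ such that for every set $L\subseteq V(G)$ of $\ell-1$ vertex leaks and every $v\in V(G)\setminus B$ there exist forces $x\to v$ and $y\to v$ in $\mathcal{F}_L(B)$ with $x\neq y$.
   Context: All graphs are finite, simple and undirected. Zero forcing: a blue vertex $u$ with exactly one white neighbor $w$ may force $w$ (color it blue), written $u\to w$. From an initial blue set $B$, a forcing sequence is a chronologically ordered list of forces each valid when performed. A vertex leak is a vertex not allowed to perform any force. $B$ is an $\ell$-leaky forcing set if for every set $L\subseteq V(G)$ of at most $\ell$ vertex leaks, exhaustively applying the forcing rule from $B$ with no vertex of $L$ forcing colors all of $V(G)$ blue (a $0$-leaky forcing set is a zero forcing set). For $L\subseteq V(G)$, $\mathcal{F}_L(B)$ is the set of all forces $x\to v$ that occur in some forcing sequence from $B$ in which no vertex of $L$ performs a force. An edge leak is an edge $xy\in E(G)$ across which no force may be performed (neither $x\to y$ nor $y\to x$). $B$ is an $\ell$-edge-leaky forcing set if for every set of at most $\ell$ edge leaks, exhaustively applying the forcing rule from $B$ without forcing across leak edges colors all of $V(G)$ blue. *)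

theory Defs
  imports Main
begin

definition simple_graph :: "'a set \<Rightarrow> ('a \<Rightarrow> 'a \<Rightarrow> bool) \<Rightarrow> bool" where
  "simple_graph V E \<longleftrightarrow> finite V \<and> (\<forall>x y. E x y \<longrightarrow> E y x) \<and> (\<forall>x. \<not> E x x)
     \<and> (\<forall>x y. E x y \<longrightarrow> x \<in> V \<and> y \<in> V)"

definition graph_edges :: "'a set \<Rightarrow> ('a \<Rightarrow> 'a \<Rightarrow> bool) \<Rightarrow> 'a set set" where
  "graph_edges V E = {{x, y} | x y. x \<in> V \<and> y \<in> V \<and> E x y}"

text \<open>A force u -> w is valid for current blue set S, where Ok u w says whether the
  force is permitted (encodes vertex leaks / edge leaks): u is blue, w is the unique
  white neighbour of u.\<close>
definition valid_force ::
  "'a set \<Rightarrow> ('a \<Rightarrow> 'a \<Rightarrow> bool) \<Rightarrow> ('a \<Rightarrow> 'a \<Rightarrow> bool) \<Rightarrow> 'a set \<Rightarrow> 'a \<Rightarrow> 'a \<Rightarrow> bool" where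
  "valid_force V E Ok S u w \<longleftrightarrow> u \<in> S \<and> w \<in> V \<and> w \<notin> S \<and> E u w \<and> Ok u w
     \<and> (\<forall>x\<in>V. E u x \<and> x \<notin> S \<longrightarrow> x = w)"

fun forcing_seq ::
  "'a set \<Rightarrow> ('a \<Rightarrow> 'a \<Rightarrow> bool) \<Rightarrow> ('a \<Rightarrow> 'a \<Rightarrow> bool) \<Rightarrow> 'a set \<Rightarrow> ('a \<times> 'a) list \<Rightarrow> bool" where
  "forcing_seq V E Ok S [] = True"
| "forcing_seq V E Ok S ((u, w) # fs) \<longleftrightarrow> valid_force V E Ok S u w \<and> forcing_seq V E Ok (insert w S) fs"

definition final_blue :: "'a set \<Rightarrow> ('a \<times> 'a) list \<Rightarrow> 'a set" where
  "final_blue B fs = B \<union> snd ` set fs"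

definition forces_all ::
  "'a set \<Rightarrow> ('a \<Rightarrow> 'a \<Rightarrow> bool) \<Rightarrow> ('a \<Rightarrow> 'a \<Rightarrow> bool) \<Rightarrow> 'a set \<Rightarrow> bool" where
  "forces_all V E Ok B \<longleftrightarrow>
     (\<forall>fs. forcing_seq V E Ok B fs \<and> (\<nexists>u w. valid_force V E Ok (final_blue B fs) u w)
        \<longrightarrow> final_blue B fs = V)"

definition leaky_forcing_set :: "'a set \<Rightarrow> ('a \<Rightarrow> 'a \<Rightarrow> bool) \<Rightarrow> nat \<Rightarrow> 'a set \<Rightarrow> bool" where
  "leaky_forcing_set V E l B \<longleftrightarrow>
     (\<forall>L. L \<subseteq> V \<and> card L \<le> l \<longrightarrow> forces_all V E (\<lambda>u w. u \<notin> L) B)"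

definition edge_leaky_forcing_set :: "'a set \<Rightarrow> ('a \<Rightarrow> 'a \<Rightarrow> bool) \<Rightarrow> nat \<Rightarrow> 'a set \<Rightarrow> bool" where
  "edge_leaky_forcing_set V E l B \<longleftrightarrow>
     (\<forall>F. F \<subseteq> graph_edges V E \<and> card F \<le> l \<longrightarrow> forces_all V E (\<lambda>u w. {u, w} \<notin> F) B)"

text \<open>F_L(B): all forces occurring in some forcing sequence from B where no vertex of L forces.\<close>
definition forces_set :: "'a set \<Rightarrow> ('a \<Rightarrow> 'a \<Rightarrow> bool) \<Rightarrow> 'a set \<Rightarrow> 'a set \<Rightarrow> ('a \<times> 'a) set" where
  "forces_set V E L B = {(x, v). \<exists>fs. forcing_seq V E (\<lambda>u w. u \<notin> L) B fs \<and> (x, v) \<in> set fs}"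

end

theory Submission
  imports Defs
begin

text \<open>
  A forcing process stalls exactly when every vertex that could still force (a blue vertex
  with exactly one white neighbour) is prevented from doing so.  Under edge leaks each such
  ready vertex needs its own leaking edge, so at most \<open>\<ell>\<close> vertices are ready.  If fewer
  than \<open>\<ell>\<close> are ready, declaring them vertex leaks stalls the process as well.  If exactly
  \<open>\<ell>\<close> are ready, turning all but one of them, \<open>u\<close>, into vertex leaks leaves \<open>u \<rightarrow> w\<close> as the
  only force ever available to reach the white neighbour \<open>w\<close> of \<open>u\<close>, so \<open>w\<close> has a single forcer.
  Conversely, a process stalled by vertex leaks \<open>L\<close>, possibly together with the ban of the
  unique force into a vertex \<open>v\<close>, is stalled just as well by the edges of the blocked
  forces, of which there are at most \<open>|L| + 1\<close>.
\<close>

definition stalled :: "'a set \<Rightarrow> ('a \<Rightarrow> 'a \<Rightarrow> bool) \<Rightarrow> ('a \<Rightarrow> 'a \<Rightarrow> bool) \<Rightarrow> 'a set \<Rightarrow> bool" where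
  "stalled V E Ok S \<longleftrightarrow> (\<nexists>u w. valid_force V E Ok S u w)"

definition can_force :: "'a set \<Rightarrow> ('a \<Rightarrow> 'a \<Rightarrow> bool) \<Rightarrow> 'a set \<Rightarrow> 'a \<Rightarrow> 'a \<Rightarrow> bool" where
  "can_force V E S u w \<longleftrightarrow> valid_force V E (\<lambda>_ _. True) S u w"

lemma not_forces_all_iff:
  "\<not> forces_all V E Ok B \<longleftrightarrow>
     (\<exists>fs. forcing_seq V E Ok B fs \<and> stalled V E Ok (final_blue B fs) \<and> final_blue B fs \<noteq> V)"
  by (auto simp: forces_all_def stalled_def)

lemma mem_forces_set_iff:
  "(x, v) \<in> forces_set V E L B \<longleftrightarrow> (\<exists>fs. forcing_seq V E (\<lambda>u w. u \<notin> L) B fs \<and> (x, v) \<in> set fs)"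
  by (simp add: forces_set_def)

lemma valid_force_iff_can_force: "valid_force V E Ok S u w \<longleftrightarrow> can_force V E S u w \<and> Ok u w"
  by (auto simp: valid_force_def can_force_def)

lemma can_force_unique: "can_force V E S u w \<Longrightarrow> can_force V E S u w' \<Longrightarrow> w = w'"
  by (auto simp: valid_force_def can_force_def)

lemma valid_force_mono:
  "valid_force V E Ok T u w \<Longrightarrow> T \<subseteq> S \<Longrightarrow> w \<notin> S \<Longrightarrow> valid_force V E Ok S u w"
  by (auto simp: valid_force_def)

lemma inj_on_edge_can_force: "inj_on (\<lambda>(u, w). {u, w}) {(u, w). can_force V E S u w}"
proof (rule inj_onI, clarify)
  fix u w u' w'
  assume "can_force V E S u w" "can_force V E S u' w'" and eq: "{u, w} = {u', w'}"
  then have "u \<in> S" "w \<notin> S" "u' \<in> S" "w' \<notin> S" by (simp_all add: valid_force_def can_force_def)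
  with eq show "u = u' \<and> w = w'" by (auto simp: doubleton_eq_iff)
qed

lemma inj_on_fst_can_force: "inj_on fst {(u, w). can_force V E S u w}"
  by (rule inj_onI) (auto dest: can_force_unique)

lemma can_force_edge:
  assumes "simple_graph V E" "can_force V E S u w"
  shows "{u, w} \<in> graph_edges V E"
proof -
  have "E u w" using assms(2) by (simp add: valid_force_def can_force_def)
  with assms(1) have "u \<in> V" "w \<in> V" by (auto simp: simple_graph_def)
  with \<open>E u w\<close> show ?thesis by (auto simp: graph_edges_def)
qed

lemma final_blue_Nil [simp]: "final_blue S [] = S"
  by (simp add: final_blue_def)

lemma final_blue_Cons [simp]: "final_blue S ((u, w) # fs) = final_blue (insert w S) fs"
  by (auto simp: final_blue_def)

lemma subset_final_blue: "S \<subseteq> final_blue S fs"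
  by (auto simp: final_blue_def)

lemma forcing_seq_append:
  "forcing_seq V E Ok S (fs @ gs) \<longleftrightarrow>
     forcing_seq V E Ok S fs \<and> forcing_seq V E Ok (final_blue S fs) gs"
proof (induction fs arbitrary: S)
  case (Cons p fs)
  then show ?case by (cases p) auto
qed simp

lemma forcing_seq_mono:
  "forcing_seq V E Ok S fs \<Longrightarrow> (\<And>u w. (u, w) \<in> set fs \<Longrightarrow> Ok' u w) \<Longrightarrow> forcing_seq V E Ok' S fs"
proof (induction fs arbitrary: S)
  case (Cons p fs)
  then show ?case by (cases p) (auto simp: valid_force_def)
qed simp

lemma forcing_seq_forceD:
  assumes "forcing_seq V E Ok S fs" "(x, v) \<in> set fs"
  shows "E x v \<and> Ok x v \<and> v \<notin> S \<and> x \<in> final_blue S fs \<and> v \<in> final_blue S fs"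
  using assms
proof (induction fs arbitrary: S)
  case (Cons p fs)
  obtain a b where p: "p = (a, b)" by fastforce
  from Cons.prems show ?case
    using Cons.IH[of "insert b S"] subset_final_blue[of "insert b S" fs]
    by (auto simp: p valid_force_def)
qed simp

lemma forcing_seq_forcer_nbrs_blue:
  assumes "forcing_seq V E Ok S fs" "(u, w) \<in> set fs" "y \<in> V" "E u y"
  shows "y \<in> final_blue S fs"
  using assms
proof (induction fs arbitrary: S)
  case (Cons p fs)
  obtain a b where p: "p = (a, b)" by fastforce
  show ?case
  proof (cases "(u, w) = (a, b)")
    case True
    then have "y \<in> insert b S" using Cons.prems by (auto simp: p valid_force_def)
    then show ?thesis using subset_final_blue[of "insert b S" fs] by (auto simp: p)
  next
    case False
    then show ?thesis using Cons by (auto simp: p)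
  qed
qed simp

lemma exists_stalled_forcing_seq:
  assumes "finite V"
  shows "\<exists>fs. forcing_seq V E Ok S fs \<and> stalled V E Ok (final_blue S fs)"
proof (induction "card (V - S)" arbitrary: S rule: less_induct)
  case less
  show ?case
  proof (cases "stalled V E Ok S")
    case True
    then show ?thesis by (intro exI[of _ "[]"]) simp
  next
    case False
    then obtain u w where force: "valid_force V E Ok S u w"
      by (auto simp: stalled_def)
    then have "w \<in> V - S" by (simp add: valid_force_def)
    then have "card (V - insert w S) < card (V - S)"
      using assms by (metis Diff_insert card_Diff1_less finite_Diff)
    with less obtain fs where
      "forcing_seq V E Ok (insert w S) fs" "stalled V E Ok (final_blue (insert w S) fs)"
      by blast
    with force show ?thesis by (intro exI[of _ "(u, w) # fs"]) simp
  qed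
qed

text \<open>The first force of the sequence that leaves \<open>S\<close> is also valid from \<open>S\<close>, hence it is
  \<open>u \<rightarrow> v\<close>; afterwards \<open>v\<close> is blue and cannot be forced again.\<close>
lemma forcer_eq_if_only_valid_force:
  assumes "forcing_seq V E Ok T fs" "T \<subseteq> S" "(x, v) \<in> set fs" "v \<notin> S"
    and only: "\<And>z t. valid_force V E Ok S z t \<Longrightarrow> z = u \<and> t = v"
  shows "x = u"
  using assms(1-4)
proof (induction fs arbitrary: T)
  case (Cons p fs)
  obtain a b where p: "p = (a, b)" by fastforce
  have force: "valid_force V E Ok T a b" and rest: "forcing_seq V E Ok (insert b T) fs"
    using Cons.prems(1) by (simp_all add: p)
  show ?case
  proof (cases "b \<in> S")
    case True
    then show ?thesis
      using Cons.IH[OF rest] Cons.prems(2-4) by (auto simp: p)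
  next
    case False
    then have "a = u" "b = v"
      using only valid_force_mono[OF force Cons.prems(2)] by blast+
    moreover have "(x, v) \<notin> set fs"
    proof
      assume "(x, v) \<in> set fs"
      with \<open>b = v\<close> show False using forcing_seq_forceD[OF rest, of x v] by simp
    qed
    ultimately show ?thesis
      using Cons.prems(3) by (auto simp: p)
  qed
qed simp

subsection \<open>From vertex leaks to edge leaks\<close>

lemma stall_with_edge_leaks:
  assumes G: "simple_graph V E"
    and seq: "forcing_seq V E Ok B fs" and stall: "stalled V E Ok (final_blue B fs)"
    and incomplete: "final_blue B fs \<noteq> V"
    and blocked: "{u. \<exists>w. can_force V E (final_blue B fs) u w \<and> \<not> Ok u w} \<subseteq> X"
    and "finite X"
  shows "\<exists>F \<subseteq> graph_edges V E. card F \<le> card X \<and> \<not> forces_all V E (\<lambda>u w. {u, w} \<notin> F) B"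
proof -
  define S where "S = final_blue B fs"
  define Blk where "Blk = {(u, w). can_force V E S u w \<and> \<not> Ok u w}"
  define F where "F = (\<lambda>(u, w). {u, w}) ` Blk"
  have Blk_sub: "Blk \<subseteq> {(u, w). can_force V E S u w}" by (auto simp: Blk_def)
  have "card F = card Blk"
    unfolding F_def by (rule card_image[OF inj_on_subset[OF inj_on_edge_can_force Blk_sub]])
  also have "\<dots> = card (fst ` Blk)"
    by (rule card_image[OF inj_on_subset[OF inj_on_fst_can_force Blk_sub], symmetric])
  also have "\<dots> \<le> card X"
  proof (rule card_mono[OF \<open>finite X\<close>], clarify)
    fix u w assume "(u, w) \<in> Blk"
    then have "can_force V E (final_blue B fs) u w" "\<not> Ok u w" by (simp_all add: Blk_def S_def)
    then show "fst (u, w) \<in> X" using blocked by auto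
  qed
  finally have card_F: "card F \<le> card X" .
  have F_edges: "F \<subseteq> graph_edges V E"
    using can_force_edge[OF G] by (auto simp: F_def Blk_def)
  have F_white: "\<exists>z \<in> e. z \<notin> S" if eF: "e \<in> F" for e
  proof -
    obtain u w where "(u, w) \<in> Blk" "e = {u, w}"
      using eF unfolding F_def by auto
    then show ?thesis by (auto simp: Blk_def valid_force_def can_force_def)
  qed
  have "forcing_seq V E (\<lambda>u w. {u, w} \<notin> F) B fs"
  proof (rule forcing_seq_mono[OF seq])
    fix u w assume "(u, w) \<in> set fs"
    then have "u \<in> S" "w \<in> S" using forcing_seq_forceD[OF seq] by (simp_all add: S_def)
    then show "{u, w} \<notin> F" using F_white by blast
  qed
  moreover have "stalled V E (\<lambda>u w. {u, w} \<notin> F) S"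
    unfolding stalled_def
  proof (intro notI, elim exE)
    fix u w assume "valid_force V E (\<lambda>u w. {u, w} \<notin> F) S u w"
    then have force: "can_force V E S u w" and "{u, w} \<notin> F"
      by (simp_all add: valid_force_iff_can_force)
    have "Ok u w"
    proof (rule ccontr)
      assume "\<not> Ok u w"
      with force have "{u, w} \<in> F" unfolding F_def Blk_def by (rule_tac rev_image_eqI) auto
      with \<open>{u, w} \<notin> F\<close> show False by contradiction
    qed
    with force stall show False by (simp add: stalled_def valid_force_iff_can_force S_def)
  qed
  ultimately show ?thesis
    using F_edges card_F incomplete by (auto simp: not_forces_all_iff S_def)
qed

lemma edge_leaky_forcing_set_completes:
  assumes G: "simple_graph V E" and EL: "edge_leaky_forcing_set V E l B"
    and "forcing_seq V E Ok B fs" "stalled V E Ok (final_blue B fs)"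
    and "{u. \<exists>w. can_force V E (final_blue B fs) u w \<and> \<not> Ok u w} \<subseteq> X"
    and "finite X" "card X \<le> l"
  shows "final_blue B fs = V"
proof (rule ccontr)
  assume incomplete: "final_blue B fs \<noteq> V"
  obtain F where F: "F \<subseteq> graph_edges V E" "card F \<le> card X"
    and stuck: "\<not> forces_all V E (\<lambda>u w. {u, w} \<notin> F) B"
    using stall_with_edge_leaks[OF G assms(3,4) incomplete assms(5,6)] by (elim exE conjE)
  have "card F \<le> l" using F(2) \<open>card X \<le> l\<close> by (rule le_trans)
  with F(1) EL have "forces_all V E (\<lambda>u w. {u, w} \<notin> F) B"
    by (simp add: edge_leaky_forcing_set_def)
  with stuck show False by contradiction
qed

lemma edge_leaky_imp_leaky:
  assumes G: "simple_graph V E" and EL: "edge_leaky_forcing_set V E l B"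
  shows "leaky_forcing_set V E l B"
  unfolding leaky_forcing_set_def
proof (intro allI impI)
  fix L assume L: "L \<subseteq> V \<and> card L \<le> l"
  then have "finite L" using G finite_subset by (auto simp: simple_graph_def)
  show "forces_all V E (\<lambda>u w. u \<notin> L) B"
    unfolding forces_all_def
  proof (intro allI impI, elim conjE)
    fix fs assume seq: "forcing_seq V E (\<lambda>u w. u \<notin> L) B fs"
      and "\<nexists>u w. valid_force V E (\<lambda>u w. u \<notin> L) (final_blue B fs) u w"
    then have stall: "stalled V E (\<lambda>u w. u \<notin> L) (final_blue B fs)"
      by (simp add: stalled_def)
    have "{u. \<exists>w. can_force V E (final_blue B fs) u w \<and> \<not> u \<notin> L} \<subseteq> L" by blast
    with L show "final_blue B fs = V"
      using edge_leaky_forcing_set_completes[OF G EL seq stall _ \<open>finite L\<close>] by blast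
  qed
qed

text \<open>Run the \<open>L\<close>-leaky process with every force into \<open>v\<close> forbidden; the forbidden forces that
  remain available at the end all belong to \<open>\<F>\<^sub>L(B)\<close>, so they share one forcer.\<close>
lemma edge_leaky_imp_two_forcers:
  assumes G: "simple_graph V E" and EL: "edge_leaky_forcing_set V E (Suc k) B"
    and L: "L \<subseteq> V" "card L \<le> k" and v: "v \<in> V - B"
  shows "\<exists>x y. (x, v) \<in> forces_set V E L B \<and> (y, v) \<in> forces_set V E L B \<and> x \<noteq> y"
proof (rule ccontr)
  assume single: "\<not> ?thesis"
  have finV: "finite V" using G by (simp add: simple_graph_def)
  define X where "X = {x. (x, v) \<in> forces_set V E L B}"
  have "X \<subseteq> V"
  proof
    fix x assume "x \<in> X"
    then obtain gs where gs: "forcing_seq V E (\<lambda>u w. u \<notin> L) B gs" "(x, v) \<in> set gs"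
      by (auto simp: X_def mem_forces_set_iff)
    then have "E x v" using forcing_seq_forceD[OF gs] by simp
    with G show "x \<in> V" by (simp add: simple_graph_def)
  qed
  then have "finite X" using finV finite_subset by blast
  moreover have "\<forall>x \<in> X. \<forall>y \<in> X. x = y" using single by (auto simp: X_def)
  ultimately have card_X: "card X \<le> 1" by (simp add: card_le_Suc0_iff_eq)
  have "finite L" using L finV finite_subset by blast
  obtain fs where seq: "forcing_seq V E (\<lambda>u w. u \<notin> L \<and> w \<noteq> v) B fs"
    and stall: "stalled V E (\<lambda>u w. u \<notin> L \<and> w \<noteq> v) (final_blue B fs)"
    using exists_stalled_forcing_seq[OF finV] by blast
  have seq_L: "forcing_seq V E (\<lambda>u w. u \<notin> L) B fs"
  proof (rule forcing_seq_mono[OF seq])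
    fix u w assume "(u, w) \<in> set fs"
    then show "u \<notin> L" using forcing_seq_forceD[OF seq] by simp
  qed
  have blocked: "{u. \<exists>w. can_force V E (final_blue B fs) u w \<and> \<not> (u \<notin> L \<and> w \<noteq> v)} \<subseteq> L \<union> X"
  proof (intro subsetI, elim CollectE exE conjE)
    fix u w assume force: "can_force V E (final_blue B fs) u w" and "\<not> (u \<notin> L \<and> w \<noteq> v)"
    show "u \<in> L \<union> X"
    proof (cases "u \<in> L")
      case False
      with force \<open>\<not> (u \<notin> L \<and> w \<noteq> v)\<close>
      have "valid_force V E (\<lambda>u w. u \<notin> L) (final_blue B fs) u v"
        by (simp add: valid_force_iff_can_force)
      then have "forcing_seq V E (\<lambda>u w. u \<notin> L) B (fs @ [(u, v)])"
        using seq_L by (simp add: forcing_seq_append)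
      then show ?thesis by (auto simp: X_def mem_forces_set_iff)
    qed simp
  qed
  have "card (L \<union> X) \<le> Suc k" using card_Un_le[of L X] L(2) card_X by linarith
  then have "final_blue B fs = V"
    using edge_leaky_forcing_set_completes[OF G EL seq stall blocked] \<open>finite L\<close> \<open>finite X\<close>
    by blast
  moreover have "v \<notin> final_blue B fs"
  proof
    assume "v \<in> final_blue B fs"
    then obtain x where "(x, v) \<in> set fs" using v by (auto simp: final_blue_def)
    then show False using forcing_seq_forceD[OF seq, of x v] by simp
  qed
  ultimately show False using v by blast
qed

subsection \<open>From edge leaks to vertex leaks\<close>

definition ready_forcers :: "'a set \<Rightarrow> ('a \<Rightarrow> 'a \<Rightarrow> bool) \<Rightarrow> 'a set \<Rightarrow> 'a set" where
  "ready_forcers V E S = {u. \<exists>w. can_force V E S u w}"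

text \<open>Each ready vertex of a process stalled by edge leaks blocks its own leaking edge.\<close>
lemma card_ready_forcers_le:
  assumes "finite F" and stall: "stalled V E (\<lambda>u w. {u, w} \<notin> F) S"
  shows "card (ready_forcers V E S) \<le> card F"
proof -
  define P where "P = {(u, w). can_force V E S u w}"
  have "ready_forcers V E S = fst ` P"
    by (force simp: ready_forcers_def P_def)
  then have "card (ready_forcers V E S) = card P"
    unfolding P_def using card_image[OF inj_on_fst_can_force] by simp
  also have "\<dots> \<le> card F"
  proof (rule card_inj_on_le[OF _ _ \<open>finite F\<close>])
    show "inj_on (\<lambda>(u, w). {u, w}) P" unfolding P_def by (rule inj_on_edge_can_force)
    show "(\<lambda>(u, w). {u, w}) ` P \<subseteq> F"
      using stall by (auto simp: P_def stalled_def valid_force_iff_can_force)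
  qed
  finally show ?thesis .
qed

lemma ready_forcers_stall:
  assumes seq: "forcing_seq V E Ok B fs" and incomplete: "final_blue B fs \<noteq> V"
  shows "\<not> forces_all V E (\<lambda>u w. u \<notin> ready_forcers V E (final_blue B fs)) B"
proof -
  define S where "S = final_blue B fs"
  have "forcing_seq V E (\<lambda>u w. u \<notin> ready_forcers V E S) B fs"
  proof (rule forcing_seq_mono[OF seq])
    fix u w assume "(u, w) \<in> set fs"
    then show "u \<notin> ready_forcers V E S"
      using forcing_seq_forcer_nbrs_blue[OF seq]
      by (auto simp: ready_forcers_def valid_force_def can_force_def S_def)
  qed
  moreover have "stalled V E (\<lambda>u w. u \<notin> ready_forcers V E S) S"
    by (auto simp: stalled_def ready_forcers_def valid_force_iff_can_force)
  ultimately show ?thesis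
    using incomplete by (auto simp: not_forces_all_iff S_def)
qed

lemma forcer_unique_if_ready_leak:
  assumes "can_force V E (final_blue B fs) u w"
    and "(x, w) \<in> forces_set V E (ready_forcers V E (final_blue B fs) - {u}) B"
  shows "x = u"
proof -
  define S where "S = final_blue B fs"
  define L where "L = ready_forcers V E S - {u}"
  have only: "z = u \<and> t = w" if "valid_force V E (\<lambda>u w. u \<notin> L) S z t" for z t
    using that assms(1) can_force_unique[of V E S u w t]
    by (auto simp: L_def S_def ready_forcers_def valid_force_iff_can_force)
  obtain gs where "forcing_seq V E (\<lambda>u w. u \<notin> L) B gs" "(x, w) \<in> set gs"
    using assms(2) by (auto simp: mem_forces_set_iff L_def S_def)
  moreover have "w \<notin> S" using assms(1) by (simp add: valid_force_def can_force_def S_def)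
  ultimately show ?thesis
    using forcer_eq_if_only_valid_force[OF _ subset_final_blue] only by (metis S_def)
qed

lemma two_forcers_imp_edge_leaky:
  assumes G: "simple_graph V E" and LK: "leaky_forcing_set V E k B"
    and two: "\<forall>L. L \<subseteq> V \<and> card L = k \<longrightarrow>
      (\<forall>v \<in> V - B. \<exists>x y. (x, v) \<in> forces_set V E L B \<and> (y, v) \<in> forces_set V E L B \<and> x \<noteq> y)"
  shows "edge_leaky_forcing_set V E (Suc k) B"
  unfolding edge_leaky_forcing_set_def
proof (intro allI impI, rule ccontr)
  fix F assume F: "F \<subseteq> graph_edges V E \<and> card F \<le> Suc k"
    and "\<not> forces_all V E (\<lambda>u w. {u, w} \<notin> F) B"
  then obtain fs where seq: "forcing_seq V E (\<lambda>u w. {u, w} \<notin> F) B fs"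
    and stall: "stalled V E (\<lambda>u w. {u, w} \<notin> F) (final_blue B fs)"
    and incomplete: "final_blue B fs \<noteq> V"
    by (auto simp: not_forces_all_iff)
  define R where "R = ready_forcers V E (final_blue B fs)"
  have finV: "finite V" using G by (simp add: simple_graph_def)
  have "finite F"
    using F finV by (auto intro: finite_subset[of _ "Pow V"] simp: graph_edges_def)
  then have card_R: "card R \<le> Suc k"
    using card_ready_forcers_le[OF _ stall] F by (fastforce simp: R_def)
  have RV: "R \<subseteq> V"
    using G by (auto simp: R_def ready_forcers_def valid_force_def can_force_def simple_graph_def)
  have not_all: "\<not> forces_all V E (\<lambda>u w. u \<notin> R) B"
    using ready_forcers_stall[OF seq incomplete] by (simp add: R_def)
  show False
  proof (cases "card R \<le> k")
    case True
    then show False using LK RV not_all by (auto simp: leaky_forcing_set_def)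
  next
    case False
    then obtain u where "u \<in> R" using card_R by fastforce
    then obtain w where uw: "can_force V E (final_blue B fs) u w"
      by (auto simp: R_def ready_forcers_def)
    have "card (R - {u}) = k" "R - {u} \<subseteq> V"
      using False card_R \<open>u \<in> R\<close> RV finite_subset[OF RV finV] by auto
    moreover have "w \<in> V - B"
      using uw subset_final_blue[of B fs] by (auto simp: valid_force_def can_force_def)
    ultimately obtain x y where "(x, w) \<in> forces_set V E (R - {u}) B"
      "(y, w) \<in> forces_set V E (R - {u}) B" "x \<noteq> y"
      using two by blast
    then show False
      using forcer_unique_if_ready_leak[OF uw] by (metis R_def)
  qed
qed

theorem theorem2p3:
  fixes V :: "'a set" and E :: "'a \<Rightarrow> 'a \<Rightarrow> bool" and B :: "'a set" and l :: nat
  assumes "simple_graph V E" and "B \<subseteq> V" and "l \<ge> 1"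
  shows "edge_leaky_forcing_set V E l B \<longleftrightarrow>
    (leaky_forcing_set V E (l - 1) B \<and>
     (\<forall>L. L \<subseteq> V \<and> card L = l - 1 \<longrightarrow>
        (\<forall>v \<in> V - B. \<exists>x y. (x, v) \<in> forces_set V E L B \<and> (y, v) \<in> forces_set V E L B \<and> x \<noteq> y)))"
proof -
  obtain k where l: "l = Suc k" using \<open>l \<ge> 1\<close> by (cases l) auto
  have "edge_leaky_forcing_set V E k B" if "edge_leaky_forcing_set V E l B"
    using that by (auto simp: edge_leaky_forcing_set_def l)
  then show ?thesis
    using edge_leaky_imp_leaky[OF assms(1)] edge_leaky_imp_two_forcers[OF assms(1)]
      two_forcers_imp_edge_leaky[OF assms(1)]
    unfolding l by auto
qed

end
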